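(* Let $\mathbb{R}^m$ be endowed with an arbitrary norm $\|\cdot\|$ and let $\mathbb{R}^n$ be endowed with the $\ell_1$ norm $\|\cdot\|_1$. Then for every $A\in\mathbb{R}^{m\times n}$ with at least two different columns, \[ \mathrm{diam}(A) = \max_{u\in \mathrm{conv}(A),\; x\in \Delta_{n-1}\setminus Z(u)} \frac{2\|Ax - u\|}{\mathrm{dist}(x,Z(u))},\qquad \Phi(A) = \min_{u\in \mathrm{conv}(A),\; x\in \Delta_{n-1}\setminus Z(u)} \frac{2\|Ax - u\|}{\mathrm{dist}(x,Z(u))}. \]
   Context: $\Delta_{n-1}=\{x\in\mathbb{R}^n_+ : \sum_i x_i=1\}$. For $A\in\mathbb{R}^{m\times n}$, $A$ is also identified with the set of its columns $a_1,\dots,a_n$, and $\mathrm{conv}(A)=\{Ax: x\in\Delta_{n-1}\}$. For $u\in\mathrm{conv}(A)$, $Z(u)=\{z\in\Delta_{n-1}: Az=u\}$, and $\mathrm{dist}(x,Z(u))=\min_{z\in Z(u)}\|x-z\|_1$ (distance in the norm of $\mathbb{R}^n$). $\mathrm{diam}(A)=\sup_{u,v\in A}\|u-v\|$ (norm of $\mathbb{R}^m$). The facial distance is $\Phi(A)=\min\{\mathrm{dist}(F,\mathrm{conv}(A\setminus F)) : F \text{ a face of } \mathrm{conv}(A),\ \emptyset\neq F\neq \mathrm{conv}(A)\}$, where $A\setminus F$ is the set of columns of $A$ not in $F$ and $\mathrm{dist}(F,G)=\inf_{u\in F,w\in G}\|u-w\|$ in the norm of $\mathbb{R}^m$. *)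

theory Defs
  imports "HOL-Analysis.Analysis"
begin

definition is_norm :: "('a::real_vector \<Rightarrow> real) \<Rightarrow> bool" where
  "is_norm N \<longleftrightarrow> (\<forall>x. 0 \<le> N x) \<and> (\<forall>x. N x = 0 \<longleftrightarrow> x = 0)
     \<and> (\<forall>c x. N (c *\<^sub>R x) = \<bar>c\<bar> * N x) \<and> (\<forall>x y. N (x + y) \<le> N x + N y)"

definition std_simplex :: "(real^'n) set" where
  "std_simplex = {x. (\<forall>i. 0 \<le> x $ i) \<and> (\<Sum>i\<in>UNIV. x $ i) = 1}"

definition convA :: "real^'n^'m \<Rightarrow> (real^'m) set" where
  "convA A = {A *v x | x. x \<in> std_simplex}"

definition Zset :: "real^'n^'m \<Rightarrow> real^'m \<Rightarrow> (real^'n) set" where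
  "Zset A u = {z \<in> std_simplex. A *v z = u}"

definition norm1 :: "real^'n \<Rightarrow> real" where
  "norm1 x = (\<Sum>i\<in>UNIV. \<bar>x $ i\<bar>)"

definition dist1 :: "real^'n \<Rightarrow> (real^'n) set \<Rightarrow> real" where
  "dist1 x S = Inf {norm1 (x - z) | z. z \<in> S}"

definition diamA :: "(real^'m \<Rightarrow> real) \<Rightarrow> real^'n^'m \<Rightarrow> real" where
  "diamA N A = Sup {N (column i A - column j A) | i j. True}"

definition setdistN :: "(real^'m \<Rightarrow> real) \<Rightarrow> (real^'m) set \<Rightarrow> (real^'m) set \<Rightarrow> real" where
  "setdistN N F G = Inf {N (u - w) | u w. u \<in> F \<and> w \<in> G}"

definition facial_distance :: "(real^'m \<Rightarrow> real) \<Rightarrow> real^'n^'m \<Rightarrow> real" where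
  "facial_distance N A = Inf {setdistN N F (convex hull {column i A | i. column i A \<notin> F}) | F.
      F face_of convA A \<and> F \<noteq> {} \<and> F \<noteq> convA A}"

definition ratios :: "(real^'m \<Rightarrow> real) \<Rightarrow> real^'n^'m \<Rightarrow> real set" where
  "ratios N A = {2 * N (A *v x - u) / dist1 x (Zset A u) | u x.
      u \<in> convA A \<and> x \<in> std_simplex - Zset A u}"

end

(* Let u \<in> conv(A) and x \<in> \<Delta> \ Z(u), and let z be an l1-nearest point of Z(u) to x.  Writing
   x - z = l (y - y') with y, y' \<in> \<Delta> the normalised positive and negative parts gives
   dist(x, Z(u)) = 2 l and A x - u = l (A y - A y'), so the ratio equals \<parallel>A y - A y'\<parallel>, which is at
   most diam(A).  Let F be the face of conv(A) with A y' in its relative interior.  No column in the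
   support of y lies in F: otherwise A y' has a representation with positive weight on that column,
   and trading y' for it inside z brings z strictly closer to x.  So A y lies in the convex hull of
   the columns outside F and the ratio is at least \<Phi>(A).  Both bounds are attained: the diameter by
   x a vertex and u another column, the facial distance by a nearest pair q \<in> F, p = A x with x
   supported on the columns outside F, since then every point of Z(q) is at l1 distance 2 from x. *)

theory Submission
  imports Defs
begin

section \<open>Norms\<close>

lemma is_norm_nonneg: "is_norm N \<Longrightarrow> 0 \<le> N x"
  by (simp add: is_norm_def)

lemma is_norm_eq_0_iff: "is_norm N \<Longrightarrow> N x = 0 \<longleftrightarrow> x = 0"
  by (simp add: is_norm_def)

lemma is_norm_pos: "is_norm N \<Longrightarrow> x \<noteq> 0 \<Longrightarrow> 0 < N x"
  using is_norm_nonneg[of N x] is_norm_eq_0_iff[of N x] by linarith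

lemma is_norm_scaleR: "is_norm N \<Longrightarrow> N (c *\<^sub>R x) = \<bar>c\<bar> * N x"
  by (simp add: is_norm_def)

lemma is_norm_triangle: "is_norm N \<Longrightarrow> N (x + y) \<le> N x + N y"
  by (simp add: is_norm_def)

lemma is_norm_minus_commute: "is_norm N \<Longrightarrow> N (x - y) = N (y - x)"
  using is_norm_scaleR[of N "-1" "x - y"] by simp

lemma is_norm_convex_on_diff:
  assumes N: "is_norm N" and "convex S"
  shows "convex_on S (\<lambda>v. N (v - a))"
proof (rule convex_onI[OF _ \<open>convex S\<close>])
  fix t :: real and x y assume t: "0 < t" "t < 1"
  have "(1 - t) *\<^sub>R x + t *\<^sub>R y - a = (1 - t) *\<^sub>R (x - a) + t *\<^sub>R (y - a)"
    by (simp add: algebra_simps)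
  then have "N ((1 - t) *\<^sub>R x + t *\<^sub>R y - a) \<le> N ((1 - t) *\<^sub>R (x - a)) + N (t *\<^sub>R (y - a))"
    using is_norm_triangle[OF N] by simp
  then show "N ((1 - t) *\<^sub>R x + t *\<^sub>R y - a) \<le> (1 - t) * N (x - a) + t * N (y - a)"
    using t by (simp add: is_norm_scaleR[OF N])
qed

lemma is_norm_continuous_on:
  fixes N :: "'a::euclidean_space \<Rightarrow> real"
  assumes "is_norm N"
  shows "continuous_on S N"
  using convex_on_continuous[OF open_UNIV is_norm_convex_on_diff[OF assms convex_UNIV, of 0]]
  by (auto intro: continuous_on_subset)

section \<open>The simplex and conv(A)\<close>

lemma std_simplex_nonneg: "x \<in> std_simplex \<Longrightarrow> 0 \<le> x $ i"
  by (simp add: std_simplex_def)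

lemma std_simplex_sum: "x \<in> std_simplex \<Longrightarrow> (\<Sum>i\<in>UNIV. x $ i) = 1"
  by (simp add: std_simplex_def)

lemma std_simplex_exists_pos:
  assumes "x \<in> std_simplex"
  obtains i where "0 < x $ i"
proof -
  have "x \<noteq> 0" using std_simplex_sum[OF assms] by auto
  then obtain i where "x $ i \<noteq> 0" by (auto simp: vec_eq_iff)
  then show thesis using that[of i] std_simplex_nonneg[OF assms, of i] by simp
qed

lemma axis_in_std_simplex: "axis i 1 \<in> std_simplex"
  by (simp add: std_simplex_def axis_def)

lemma convex_std_simplex: "convex std_simplex"
  unfolding convex_def std_simplex_def
  by (auto simp: sum.distrib sum_distrib_left[symmetric])

lemma compact_std_simplex: "compact std_simplex"
proof (unfold compact_eq_bounded_closed, rule conjI)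
  show "bounded std_simplex"
    unfolding bounded_iff
    by (metis norm_le_l1_cart std_simplex_nonneg std_simplex_sum abs_of_nonneg sum.cong)
  have "std_simplex = (\<Inter>i. {x. 0 \<le> x $ i}) \<inter> {x. (\<Sum>i\<in>UNIV. x $ i) = 1}"
    unfolding std_simplex_def by auto
  also have "closed \<dots>"
    by (intro closed_Int closed_INT ballI closed_Collect_le closed_Collect_eq continuous_intros)
  finally show "closed std_simplex" .
qed

lemma std_simplex_split_axis:
  assumes x: "x \<in> std_simplex" and t: "0 < t" "t < 1" "t \<le> x $ i"
  obtains v where "v \<in> std_simplex" "x = (1 - t) *\<^sub>R v + t *\<^sub>R axis i 1"
proof
  define v where "v = (1 / (1 - t)) *\<^sub>R (x - t *\<^sub>R axis i 1)"
  show "x = (1 - t) *\<^sub>R v + t *\<^sub>R axis i 1"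
    using t by (simp add: v_def)
  have "0 \<le> v $ j" for j
    using t std_simplex_nonneg[OF x, of j] by (auto simp: v_def axis_def)
  moreover have "(\<Sum>j\<in>UNIV. v $ j) = ((\<Sum>j\<in>UNIV. x $ j) - t * (\<Sum>j\<in>UNIV. axis i 1 $ j)) / (1 - t)"
    by (simp add: v_def sum_divide_distrib[symmetric] sum_subtractf sum_distrib_left)
  then have "(\<Sum>j\<in>UNIV. v $ j) = 1"
    using t std_simplex_sum[OF x] by (simp add: axis_def)
  ultimately show "v \<in> std_simplex" by (simp add: std_simplex_def)
qed

lemma matrix_vector_mult_eq_sum_columns:
  "(A::real^'n^'m) *v x = (\<Sum>i\<in>UNIV. x $ i *\<^sub>R column i A)"
  by (simp add: matrix_mult_sum scalar_mult_eq_scaleR)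

lemma convex_hull_columns:
  fixes A :: "real^'n^'m"
  shows "convex hull ((\<lambda>i. column i A) ` K) = (*v) A ` {x \<in> std_simplex. \<forall>i. i \<notin> K \<longrightarrow> x $ i = 0}"
    (is "_ = (*v) A ` ?X")
proof
  have "convex ?X"
    using convex_std_simplex unfolding convex_def by auto
  then have "convex ((*v) A ` ?X)"
    by (rule convex_linear_image[OF matrix_vector_mul_linear])
  moreover have "(\<lambda>i. column i A) ` K \<subseteq> (*v) A ` ?X"
    using axis_in_std_simplex
    by (force simp: matrix_vector_mult_basis[symmetric] axis_def)
  ultimately show "convex hull ((\<lambda>i. column i A) ` K) \<subseteq> (*v) A ` ?X"
    by (rule hull_minimal[rotated])
next
  show "(*v) A ` ?X \<subseteq> convex hull ((\<lambda>i. column i A) ` K)"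
  proof
    fix p assume "p \<in> (*v) A ` ?X"
    then obtain x where x: "x \<in> std_simplex" "\<And>i. i \<notin> K \<Longrightarrow> x $ i = 0" "p = A *v x"
      by blast
    have "p = (\<Sum>i\<in>K. x $ i *\<^sub>R column i A)"
      unfolding x(3) matrix_vector_mult_eq_sum_columns
      by (rule sum.mono_neutral_right) (use x(2) in auto)
    also have "\<dots> \<in> convex hull ((\<lambda>i. column i A) ` K)"
    proof (rule convex_sum)
      have "(\<Sum>i\<in>UNIV. x $ i) = (\<Sum>i\<in>K. x $ i)"
        by (rule sum.mono_neutral_right) (use x(2) in auto)
      then show "(\<Sum>i\<in>K. x $ i) = 1" using std_simplex_sum[OF x(1)] by simp
    qed (use std_simplex_nonneg[OF x(1)] in \<open>auto intro: hull_inc\<close>)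
    finally show "p \<in> convex hull ((\<lambda>i. column i A) ` K)" .
  qed
qed

lemma convA_eq_convex_hull: "convA A = convex hull (range (\<lambda>i. column i A))"
  unfolding convex_hull_columns convA_def by auto

lemma column_in_convA: "column i A \<in> convA A"
  unfolding convA_eq_convex_hull by (simp add: hull_inc)

lemma convex_convA: "convex (convA A)"
  unfolding convA_eq_convex_hull by simp

lemma polytope_convA: "polytope (convA A)"
  unfolding convA_eq_convex_hull polytope_def by (intro exI[of _ "range (\<lambda>i. column i A)"]) simp

lemma compact_convA: "compact (convA A)"
  by (simp add: polytope_convA polytope_imp_compact)

lemma matrix_vector_mult_in_convex_hull_support:
  fixes A :: "real^'n^'m"
  assumes "y \<in> std_simplex"
  shows "A *v y \<in> convex hull ((\<lambda>i. column i A) ` {i. 0 < y $ i})"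
  unfolding convex_hull_columns
  using assms std_simplex_nonneg[OF assms] by (force simp: order_le_less)

section \<open>Nearest points in Z(u)\<close>

lemma norm_le_norm1: "norm x \<le> norm1 x"
  unfolding norm1_def by (rule norm_le_l1_cart)

lemma norm1_scaleR: "norm1 (c *\<^sub>R x) = \<bar>c\<bar> * norm1 x"
  unfolding norm1_def by (simp add: abs_mult sum_distrib_left)

lemma continuous_on_norm1: "continuous_on S norm1"
  unfolding norm1_def by (intro continuous_intros)

lemma norm1_diff_std_simplex_le:
  assumes "x \<in> std_simplex" "y \<in> std_simplex"
  shows "norm1 (x - y) \<le> 2"
proof -
  have "norm1 (x - y) \<le> (\<Sum>j\<in>UNIV. x $ j + y $ j)"
    unfolding norm1_def using assms
    by (intro sum_mono) (auto simp: abs_le_iff std_simplex_nonneg)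
  then show ?thesis using assms by (simp add: sum.distrib std_simplex_sum)
qed

lemma norm1_diff_std_simplex_less:
  assumes x: "x \<in> std_simplex" and y: "y \<in> std_simplex" and i: "0 < x $ i" "0 < y $ i"
  shows "norm1 (x - y) < 2"
proof -
  have "norm1 (x - y) < (\<Sum>j\<in>UNIV. x $ j + y $ j)"
    unfolding norm1_def
  proof (rule sum_strict_mono_ex1)
    show "\<forall>j\<in>UNIV. \<bar>(x - y) $ j\<bar> \<le> x $ j + y $ j"
      using std_simplex_nonneg[OF x] std_simplex_nonneg[OF y] by (auto simp: abs_le_iff)
    show "\<exists>j\<in>UNIV. \<bar>(x - y) $ j\<bar> < x $ j + y $ j"
      using i by (intro bexI[of _ i]) auto
  qed simp
  then show ?thesis using x y by (simp add: sum.distrib std_simplex_sum)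
qed

lemma norm1_diff_std_simplex_disjoint:
  assumes x: "x \<in> std_simplex" and y: "y \<in> std_simplex" and disj: "\<And>j. x $ j = 0 \<or> y $ j = 0"
  shows "norm1 (x - y) = 2"
proof -
  have "\<bar>(x - y) $ j\<bar> = x $ j + y $ j" for j
    using disj[of j] std_simplex_nonneg[OF x, of j] std_simplex_nonneg[OF y, of j] by auto
  then have "norm1 (x - y) = (\<Sum>j\<in>UNIV. x $ j + y $ j)"
    unfolding norm1_def by simp
  then show ?thesis using x y by (simp add: sum.distrib std_simplex_sum)
qed

lemma dist1_attained:
  assumes "compact S" "S \<noteq> {}"
  obtains z where "z \<in> S" "dist1 x S = norm1 (x - z)" "\<And>z'. z' \<in> S \<Longrightarrow> norm1 (x - z) \<le> norm1 (x - z')"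
proof -
  have "continuous_on S (\<lambda>z. norm1 (x - z))"
    by (rule continuous_on_compose2[OF continuous_on_norm1]) (auto intro: continuous_intros)
  then obtain z where z: "z \<in> S" "\<And>z'. z' \<in> S \<Longrightarrow> norm1 (x - z) \<le> norm1 (x - z')"
    using continuous_attains_inf[OF assms] by blast
  moreover have "dist1 x S = norm1 (x - z)"
    unfolding dist1_def by (rule cInf_eq_minimum) (use z in auto)
  ultimately show thesis using that by blast
qed

lemma dist1_pos:
  assumes "compact S" "S \<noteq> {}" "x \<notin> S"
  shows "0 < dist1 x S"
proof -
  obtain z where "z \<in> S" "dist1 x S = norm1 (x - z)"
    using dist1_attained[OF assms(1,2)] by metis
  moreover have "0 < norm (x - z)" using \<open>z \<in> S\<close> assms(3) by auto
  ultimately show ?thesis using norm_le_norm1[of "x - z"] by linarith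
qed

lemma compact_Zset: "compact (Zset A u)"
proof -
  have "Zset A u = std_simplex \<inter> {z. A *v z = u}" by (auto simp: Zset_def)
  moreover have "closed {z. A *v z = u}"
    by (intro closed_Collect_eq continuous_intros)
  ultimately show ?thesis using compact_std_simplex by (metis compact_Int_closed)
qed

lemma Zset_nonempty: "u \<in> convA A \<Longrightarrow> Zset A u \<noteq> {}"
  by (auto simp: convA_def Zset_def)

text \<open>y and y' are the normalised positive and negative parts of x - z.\<close>
lemma std_simplex_diff_decompose:
  assumes x: "x \<in> std_simplex" and z: "z \<in> std_simplex" and "x \<noteq> z"
  obtains l y y' where "0 < l" "y \<in> std_simplex" "y' \<in> std_simplex"
    "x - z = l *\<^sub>R (y - y')" "norm1 (x - z) = 2 * l" "\<And>j. l * y' $ j \<le> z $ j"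
proof -
  define pos where "pos = (\<chi> j. max ((x - z) $ j) 0)"
  define neg where "neg = (\<chi> j. max (z $ j - x $ j) 0)"
  define l where "l = (\<Sum>j\<in>UNIV. pos $ j)"
  have diff: "x - z = pos - neg" by (auto simp: vec_eq_iff pos_def neg_def)
  have "(\<Sum>j\<in>UNIV. pos $ j) - (\<Sum>j\<in>UNIV. neg $ j) = (\<Sum>j\<in>UNIV. (x - z) $ j)"
    by (simp add: diff sum_subtractf)
  also have "\<dots> = 0" using x z by (simp add: sum_subtractf std_simplex_sum)
  finally have neg_sum: "(\<Sum>j\<in>UNIV. neg $ j) = l" by (simp add: l_def)
  have "norm1 (x - z) = (\<Sum>j\<in>UNIV. pos $ j + neg $ j)"
    unfolding norm1_def by (rule sum.cong) (auto simp: pos_def neg_def)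
  then have norm: "norm1 (x - z) = 2 * l" by (simp add: sum.distrib neg_sum l_def)
  have "0 < norm (x - z)" using \<open>x \<noteq> z\<close> by simp
  then have "0 < norm1 (x - z)" using norm_le_norm1[of "x - z"] by linarith
  then have l: "0 < l" using norm by simp
  have nonneg: "0 \<le> pos $ j" "0 \<le> neg $ j" for j by (auto simp: pos_def neg_def)
  show thesis
  proof (rule that[of l "(1 / l) *\<^sub>R pos" "(1 / l) *\<^sub>R neg"])
    show "(1 / l) *\<^sub>R pos \<in> std_simplex" "(1 / l) *\<^sub>R neg \<in> std_simplex"
      using l nonneg neg_sum
      by (auto simp: std_simplex_def l_def sum_divide_distrib[symmetric])
    show "x - z = l *\<^sub>R ((1 / l) *\<^sub>R pos - (1 / l) *\<^sub>R neg)"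
      using l by (simp add: diff scaleR_diff_right)
    show "l * ((1 / l) *\<^sub>R neg) $ j \<le> z $ j" for j
      using l std_simplex_nonneg[OF x, of j] std_simplex_nonneg[OF z, of j] by (simp add: neg_def)
  qed (use l norm in auto)
qed

lemma Zset_exchange:
  assumes z: "z \<in> Zset A u" and y': "y' \<in> std_simplex" and y'': "y'' \<in> std_simplex"
    and eq: "A *v y'' = A *v y'" and le: "\<And>j. l * y' $ j \<le> z $ j" and l: "0 \<le> l"
  shows "z - l *\<^sub>R y' + l *\<^sub>R y'' \<in> Zset A u"
proof -
  have "0 \<le> (z - l *\<^sub>R y' + l *\<^sub>R y'') $ j" for j
    using le[of j] l std_simplex_nonneg[OF y'', of j] by simp
  moreover have "(\<Sum>j\<in>UNIV. (z - l *\<^sub>R y' + l *\<^sub>R y'') $ j) = 1"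
    using z y' y'' by (simp add: Zset_def sum.distrib sum_subtractf std_simplex_sum flip: sum_distrib_left)
  moreover have "A *v (z - l *\<^sub>R y' + l *\<^sub>R y'') = u"
    using z eq by (simp add: Zset_def matrix_vector_right_distrib matrix_vector_mult_diff_distrib
        matrix_vector_mult_scaleR)
  ultimately show ?thesis by (simp add: Zset_def std_simplex_def)
qed

text \<open>Prolong the segment from the column through q slightly beyond q inside F, and read q off as a
  convex combination of the column and the new endpoint.\<close>
lemma rel_interior_point_represented_via_column:
  fixes A :: "real^'n^'m"
  assumes F: "convex F" "F \<subseteq> convA A" and q: "q \<in> rel_interior F" and col: "column i A \<in> F"
  obtains y where "y \<in> std_simplex" "0 < y $ i" "A *v y = q"
proof -
  obtain e where e: "1 < e" "(1 - e) *\<^sub>R column i A + e *\<^sub>R q \<in> F"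
    using convex_rel_interior_iff[OF F(1)] q col by blast
  then obtain v where v: "v \<in> std_simplex" "A *v v = (1 - e) *\<^sub>R column i A + e *\<^sub>R q"
    using F(2) by (auto simp: convA_def)
  define y where "y = (1 / e) *\<^sub>R v + (1 - 1 / e) *\<^sub>R axis i 1"
  have "y \<in> std_simplex"
    unfolding y_def using e(1) v(1) axis_in_std_simplex
    by (intro convexD[OF convex_std_simplex]) auto
  moreover have "0 < y $ i"
  proof -
    have "0 \<le> v $ i / e" "1 / e < 1" using e(1) std_simplex_nonneg[OF v(1), of i] by auto
    then show ?thesis by (simp add: y_def axis_def)
  qed
  moreover have "A *v y = q"
  proof -
    have "A *v y = ((1 / e) * (1 - e) + (1 - 1 / e)) *\<^sub>R column i A + q"
      using e(1) v(2)
      by (simp add: y_def matrix_vector_right_distrib matrix_vector_mult_scaleR matrix_vector_mult_basis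
          scaleR_add_right scaleR_left_distrib)
    also have "(1 / e) * (1 - e) + (1 - 1 / e) = 0"
      using e(1) by (simp add: field_simps)
    finally show ?thesis by simp
  qed
  ultimately show thesis using that by blast
qed

lemma exists_face_rel_interior:
  fixes S :: "'a::euclidean_space set"
  assumes S: "convex S" and q: "q \<in> S"
  obtains F where "F face_of S" "q \<in> rel_interior F"
proof -
  define F where "F = \<Inter>{G. G face_of S \<and> q \<in> G}"
  have F: "F face_of S" unfolding F_def
    by (rule face_of_Inter) (use S q face_of_refl in auto)
  have qF: "q \<in> F" unfolding F_def by auto
  have cF: "convex F" using F face_of_imp_convex by blast
  have "q \<in> rel_interior F"
  proof (rule ccontr)
    assume nq: "q \<notin> rel_interior F"
    obtain a where "a \<noteq> 0"
      and a: "\<And>y. y \<in> F \<Longrightarrow> a \<bullet> q \<le> a \<bullet> y" "\<And>y. y \<in> rel_interior F \<Longrightarrow> a \<bullet> q < a \<bullet> y"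
      using supporting_hyperplane_rel_boundary[OF cF qF nq] by blast
    define H where "H = F \<inter> {y. a \<bullet> y = a \<bullet> q}"
    have "H face_of F" unfolding H_def
      by (rule face_of_Int_supporting_hyperplane_ge) (use cF a in auto)
    then have "H face_of S" using F face_of_trans by blast
    with qF have "F \<subseteq> H" unfolding F_def H_def by blast
    moreover obtain y where y: "y \<in> rel_interior F"
      using cF qF rel_interior_eq_empty by blast
    ultimately show False using a(2)[OF y] rel_interior_subset by (force simp: H_def)
  qed
  with F show thesis using that by blast
qed

text \<open>The heart of the argument: were the column in F, replacing l y' by l y'' in z, where y'' puts
  positive weight on the column and A y'' = A y', would bring z strictly closer to x.\<close>
lemma nearest_point_support_avoids_face:
  fixes A :: "real^'n^'m"
  assumes z: "z \<in> Zset A u" and nearest: "\<And>z'. z' \<in> Zset A u \<Longrightarrow> norm1 (x - z) \<le> norm1 (x - z')"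
    and l: "0 < l" and y: "y \<in> std_simplex" and y': "y' \<in> std_simplex"
    and diff: "x - z = l *\<^sub>R (y - y')" and norm: "norm1 (x - z) = 2 * l"
    and le: "\<And>j. l * y' $ j \<le> z $ j"
    and F: "convex F" "F \<subseteq> convA A" "A *v y' \<in> rel_interior F" and i: "0 < y $ i"
  shows "column i A \<notin> F"
proof
  assume "column i A \<in> F"
  then obtain y'' where y'': "y'' \<in> std_simplex" "0 < y'' $ i" "A *v y'' = A *v y'"
    using rel_interior_point_represented_via_column[OF F] by blast
  have "z - l *\<^sub>R y' + l *\<^sub>R y'' \<in> Zset A u"
    using Zset_exchange[OF z y' y''(1,3) le] l by simp
  then have "2 * l \<le> norm1 (x - (z - l *\<^sub>R y' + l *\<^sub>R y''))"
    using nearest norm by metis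
  also have "x - (z - l *\<^sub>R y' + l *\<^sub>R y'') = l *\<^sub>R (y - y'')"
    using diff by (simp add: algebra_simps)
  also have "norm1 (l *\<^sub>R (y - y'')) < l * 2"
    using l norm1_diff_std_simplex_less[OF y y''(1) i y''(2)] by (simp add: norm1_scaleR)
  finally show False by simp
qed

lemma ratio_eq_face_complement_distance:
  fixes A :: "real^'n^'m"
  assumes N: "is_norm N" and u: "u \<in> convA A" and x: "x \<in> std_simplex" "x \<notin> Zset A u"
  obtains F p q where "F face_of convA A" "F \<noteq> {}" "F \<noteq> convA A" "q \<in> F"
    "p \<in> convex hull {column i A | i. column i A \<notin> F}"
    "2 * N (A *v x - u) / dist1 x (Zset A u) = N (p - q)"
proof -
  obtain z where z: "z \<in> Zset A u" "dist1 x (Zset A u) = norm1 (x - z)"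
    and nearest: "\<And>z'. z' \<in> Zset A u \<Longrightarrow> norm1 (x - z) \<le> norm1 (x - z')"
    using dist1_attained[OF compact_Zset Zset_nonempty[OF u]] by blast
  have "x \<noteq> z" "z \<in> std_simplex" using x z by (auto simp: Zset_def)
  then obtain l y y' where l: "0 < l" and y: "y \<in> std_simplex" "y' \<in> std_simplex"
    and diff: "x - z = l *\<^sub>R (y - y')" and norm: "norm1 (x - z) = 2 * l"
    and le: "\<And>j. l * y' $ j \<le> z $ j"
    using std_simplex_diff_decompose[OF x(1)] by metis
  have "A *v y' \<in> convA A" using y(2) by (auto simp: convA_def)
  then obtain F where F: "F face_of convA A" "A *v y' \<in> rel_interior F"
    using exists_face_rel_interior[OF convex_convA] by blast
  have avoid: "column i A \<notin> F" if "0 < y $ i" for i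
    using nearest_point_support_avoids_face[OF z(1) nearest l y diff norm le
        face_of_imp_convex[OF F(1)] face_of_imp_subset[OF F(1)] F(2) that] .
  obtain i where "0 < y $ i" using std_simplex_exists_pos[OF y(1)] .
  then have "F \<noteq> convA A" using avoid column_in_convA by blast
  moreover have "A *v y' \<in> F" using F(2) rel_interior_subset by blast
  moreover have "A *v y \<in> convex hull {column i A | i. column i A \<notin> F}"
  proof -
    have "(\<lambda>i. column i A) ` {i. 0 < y $ i} \<subseteq> {column i A | i. column i A \<notin> F}"
      using avoid by blast
    then show ?thesis
      using matrix_vector_mult_in_convex_hull_support[OF y(1)] hull_mono by blast
  qed
  moreover have "2 * N (A *v x - u) / dist1 x (Zset A u) = N (A *v y - A *v y')"
  proof -
    have "A *v x - u = A *v (x - z)"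
      using z(1) by (simp add: Zset_def matrix_vector_mult_diff_distrib)
    also have "\<dots> = l *\<^sub>R (A *v y - A *v y')"
      by (simp add: diff matrix_vector_mult_scaleR matrix_vector_mult_diff_distrib)
    finally show ?thesis using l by (simp add: z(2) norm is_norm_scaleR[OF N])
  qed
  ultimately show thesis using that F(1) by blast
qed

section \<open>The diameter\<close>

lemma diamA_eq_Max:
  "diamA N A = Max ((\<lambda>(i, j). N (column i A - column j A)) ` UNIV)"
proof -
  have "{N (column i A - column j A) | i j. True} = (\<lambda>(i, j). N (column i A - column j A)) ` UNIV"
    by auto
  then show ?thesis unfolding diamA_def by (simp add: cSup_eq_Max)
qed

lemma column_dist_le_diamA: "N (column i A - column j A) \<le> diamA N A"
  unfolding diamA_eq_Max by (rule Max_ge) auto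

lemma diamA_attained:
  obtains i j where "diamA N A = N (column i A - column j A)"
proof -
  have "diamA N A \<in> (\<lambda>(i, j). N (column i A - column j A)) ` UNIV"
    unfolding diamA_eq_Max by (rule Max_in) auto
  then show thesis using that by auto
qed

lemma dist_convA_le_diamA:
  fixes A :: "real^'n^'m"
  assumes N: "is_norm N" and p: "p \<in> convA A" and q: "q \<in> convA A"
  shows "N (p - q) \<le> diamA N A"
proof -
  let ?C = "range (\<lambda>i. column i A)"
  have col: "N (column i A - q) \<le> diamA N A" if q: "q \<in> convA A" for i q
  proof -
    have "\<forall>q\<in>convex hull ?C. N (q - column i A) \<le> diamA N A"
      by (rule convex_on_convex_hull_bound)
        (auto simp: is_norm_convex_on_diff[OF N] is_norm_minus_commute[OF N] column_dist_le_diamA)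
    then show ?thesis using q is_norm_minus_commute[OF N] by (simp add: convA_eq_convex_hull)
  qed
  have "\<forall>p\<in>convex hull ?C. N (p - q) \<le> diamA N A"
    by (rule convex_on_convex_hull_bound) (auto simp: is_norm_convex_on_diff[OF N] col[OF q])
  then show ?thesis using p by (simp add: convA_eq_convex_hull)
qed

lemma ratios_le_diamA:
  assumes N: "is_norm N" and r: "r \<in> ratios N A"
  shows "r \<le> diamA N A"
proof -
  obtain u x where u: "u \<in> convA A" and x: "x \<in> std_simplex" "x \<notin> Zset A u"
    and r_eq: "r = 2 * N (A *v x - u) / dist1 x (Zset A u)"
    using r unfolding ratios_def by blast
  obtain F p q where F: "F face_of convA A" "F \<noteq> {}" "F \<noteq> convA A" "q \<in> F"
    and p: "p \<in> convex hull {column i A | i. column i A \<notin> F}"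
    and ratio: "2 * N (A *v x - u) / dist1 x (Zset A u) = N (p - q)"
    by (rule ratio_eq_face_complement_distance[OF N u x])
  have "p \<in> convA A"
    using p hull_mono[of "{column i A | i. column i A \<notin> F}" "range (\<lambda>i. column i A)"]
    by (auto simp: convA_eq_convex_hull)
  moreover have "q \<in> convA A" using F(1,4) face_of_imp_subset by blast
  ultimately show ?thesis using r_eq ratio dist_convA_le_diamA[OF N] by simp
qed

lemma diamA_in_ratios:
  assumes N: "is_norm N" and distinct: "\<exists>i j. column i A \<noteq> column j A"
  shows "diamA N A \<in> ratios N A"
proof -
  obtain i j where ij: "diamA N A = N (column i A - column j A)" using diamA_attained by blast
  obtain i' j' where "column i' A \<noteq> column j' A" using distinct by blast
  then have "0 < N (column i' A - column j' A)"
    using is_norm_pos[OF N] by simp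
  then have pos: "0 < diamA N A" using column_dist_le_diamA by (rule less_le_trans)
  let ?Z = "Zset A (column j A)"
  have x: "axis i 1 \<notin> ?Z"
    using pos ij is_norm_eq_0_iff[OF N, of 0] by (auto simp: Zset_def matrix_vector_mult_basis)
  have u: "column j A \<in> convA A" by (rule column_in_convA)
  define d where "d = dist1 (axis i 1) ?Z"
  have d: "0 < d" unfolding d_def by (rule dist1_pos[OF compact_Zset Zset_nonempty[OF u] x])
  obtain z where "z \<in> ?Z" "d = norm1 (axis i 1 - z)"
    using dist1_attained[OF compact_Zset Zset_nonempty[OF u]] unfolding d_def by metis
  then have "d \<le> 2" using norm1_diff_std_simplex_le[OF axis_in_std_simplex, of z i] by (simp add: Zset_def)
  have r: "2 * N (A *v axis i 1 - column j A) / d \<in> ratios N A"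
    unfolding ratios_def d_def using u x axis_in_std_simplex by blast
  have "diamA N A \<le> 2 * diamA N A / d"
    using pos d \<open>d \<le> 2\<close> by (simp add: field_simps)
  also have "\<dots> = 2 * N (A *v axis i 1 - column j A) / d"
    by (simp add: ij matrix_vector_mult_basis)
  finally show ?thesis using ratios_le_diamA[OF N r] r by (metis order_antisym)
qed

section \<open>The facial distance\<close>

lemma setdistN_le: "is_norm N \<Longrightarrow> u \<in> F \<Longrightarrow> w \<in> G \<Longrightarrow> setdistN N F G \<le> N (u - w)"
  unfolding setdistN_def by (rule cInf_lower) (auto intro: bdd_belowI[of _ 0] simp: is_norm_nonneg)

lemma setdistN_nonneg:
  assumes "is_norm N" "F \<noteq> {}" "G \<noteq> {}"
  shows "0 \<le> setdistN N F G"
  unfolding setdistN_def using assms by (intro cInf_greatest) (auto simp: is_norm_nonneg)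

lemma setdistN_attained:
  assumes N: "is_norm N" and F: "compact F" "F \<noteq> {}" and G: "compact G" "G \<noteq> {}"
  obtains u w where "u \<in> F" "w \<in> G" "setdistN N F G = N (u - w)"
proof -
  have "continuous_on (F \<times> G) (\<lambda>uw. N (fst uw - snd uw))"
    by (rule continuous_on_compose2[OF is_norm_continuous_on[OF N, of UNIV]]) (auto intro!: continuous_intros)
  then obtain uw where uw: "uw \<in> F \<times> G" "\<And>uw'. uw' \<in> F \<times> G \<Longrightarrow> N (fst uw - snd uw) \<le> N (fst uw' - snd uw')"
    using continuous_attains_inf[OF compact_Times[OF F(1) G(1)]] F(2) G(2) by blast
  have "setdistN N F G = N (fst uw - snd uw)"
    unfolding setdistN_def by (rule cInf_eq_minimum) (use uw in force)+
  then show thesis using that uw(1) by (auto simp: mem_Times_iff)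
qed

lemma proper_face_excludes_column:
  assumes "F face_of convA A" "F \<noteq> convA A"
  obtains i where "column i A \<notin> F"
proof -
  have "\<not> range (\<lambda>i. column i A) \<subseteq> F"
  proof
    assume "range (\<lambda>i. column i A) \<subseteq> F"
    then have "convA A \<subseteq> F"
      unfolding convA_eq_convex_hull using face_of_imp_convex[OF assms(1)] by (rule hull_minimal)
    then show False using assms face_of_imp_subset by blast
  qed
  then show thesis using that by blast
qed

lemma facial_distance_le:
  assumes N: "is_norm N" and F: "F face_of convA A" "F \<noteq> {}" "F \<noteq> convA A"
    and q: "q \<in> F" and p: "p \<in> convex hull {column i A | i. column i A \<notin> F}"
  shows "facial_distance N A \<le> N (p - q)"
proof -
  let ?D = "{setdistN N G (convex hull {column i A | i. column i A \<notin> G}) | G.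
      G face_of convA A \<and> G \<noteq> {} \<and> G \<noteq> convA A}"
  have "0 \<le> setdistN N G (convex hull {column i A | i. column i A \<notin> G})"
    if G: "G face_of convA A" "G \<noteq> {}" "G \<noteq> convA A" for G
  proof -
    obtain i where "column i A \<notin> G" using proper_face_excludes_column G(1,3) .
    then have "column i A \<in> convex hull {column i A | i. column i A \<notin> G}"
      by (intro hull_inc) blast
    then show ?thesis using setdistN_nonneg[OF N G(2)] by blast
  qed
  then have "bdd_below ?D" by (intro bdd_belowI[of _ 0]) blast
  moreover have "setdistN N F (convex hull {column i A | i. column i A \<notin> F}) \<in> ?D"
    using F by blast
  ultimately have "facial_distance N A \<le> setdistN N F (convex hull {column i A | i. column i A \<notin> F})"
    unfolding facial_distance_def by (rule cInf_lower[rotated])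
  also have "\<dots> \<le> N (q - p)" by (rule setdistN_le[OF N q p])
  finally show ?thesis by (simp add: is_norm_minus_commute[OF N])
qed

lemma facial_distance_le_ratios:
  assumes N: "is_norm N" and r: "r \<in> ratios N A"
  shows "facial_distance N A \<le> r"
proof -
  obtain u x where u: "u \<in> convA A" and x: "x \<in> std_simplex" "x \<notin> Zset A u"
    and r_eq: "r = 2 * N (A *v x - u) / dist1 x (Zset A u)"
    using r unfolding ratios_def by blast
  obtain F p q where F: "F face_of convA A" "F \<noteq> {}" "F \<noteq> convA A" "q \<in> F"
    and p: "p \<in> convex hull {column i A | i. column i A \<notin> F}"
    and ratio: "2 * N (A *v x - u) / dist1 x (Zset A u) = N (p - q)"
    by (rule ratio_eq_face_complement_distance[OF N u x])
  show ?thesis using facial_distance_le[OF N F p] r_eq ratio by simp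
qed

lemma exists_proper_face:
  assumes "column i A \<noteq> column j A"
  obtains F where "F face_of convA A" "F \<noteq> {}" "F \<noteq> convA A"
proof -
  have "convA A = convex hull {v. v extreme_point_of convA A}"
    by (rule Krein_Milman_Minkowski[OF compact_convA convex_convA])
  moreover have "convA A \<noteq> {}" using column_in_convA by blast
  ultimately obtain v where "v extreme_point_of convA A"
    by (metis (no_types) Collect_empty_eq convex_hull_empty)
  moreover have "{v} \<noteq> convA A"
  proof
    assume eq: "{v} = convA A"
    show False using assms column_in_convA[of i A, folded eq] column_in_convA[of j A, folded eq] by simp
  qed
  ultimately show thesis using that face_of_singleton by blast
qed

lemma facial_distance_attained:
  assumes N: "is_norm N" and distinct: "\<exists>i j. column i A \<noteq> column j A"
  obtains F p q where "F face_of convA A" "F \<noteq> {}" "F \<noteq> convA A" "q \<in> F"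
    "p \<in> convex hull {column i A | i. column i A \<notin> F}" "facial_distance N A = N (p - q)"
proof -
  define G where "G F = convex hull {column i A | i. column i A \<notin> F}" for F
  define PF where "PF = {F. F face_of convA A \<and> F \<noteq> {} \<and> F \<noteq> convA A}"
  have "finite PF"
    by (rule finite_subset[OF _ finite_polytope_faces[OF polytope_convA]]) (auto simp: PF_def)
  moreover obtain i j where "column i A \<noteq> column j A" using distinct by blast
  then obtain F0 where "F0 face_of convA A" "F0 \<noteq> {}" "F0 \<noteq> convA A"
    by (rule exists_proper_face)
  then have "PF \<noteq> {}" unfolding PF_def by blast
  moreover have "facial_distance N A = Inf ((\<lambda>F. setdistN N F (G F)) ` PF)"
    unfolding facial_distance_def PF_def G_def by (simp add: setcompr_eq_image)
  ultimately have "facial_distance N A \<in> (\<lambda>F. setdistN N F (G F)) ` PF"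
    by (simp add: cInf_eq_Min)
  then obtain F where PF: "F \<in> PF" and F_eq: "facial_distance N A = setdistN N F (G F)"
    by blast
  then have F: "F face_of convA A" "F \<noteq> {}" "F \<noteq> convA A" by (auto simp: PF_def)
  obtain i where "column i A \<notin> F" using proper_face_excludes_column F(1,3) .
  then have "column i A \<in> G F" unfolding G_def by (intro hull_inc) blast
  then have G_ne: "G F \<noteq> {}" by blast
  have G_compact: "compact (G F)"
    unfolding G_def by (rule finite_imp_compact_convex_hull) (simp add: full_SetCompr_eq)
  have F_compact: "compact F" using face_of_imp_compact[OF convex_convA compact_convA F(1)] .
  obtain q p where qp: "q \<in> F" "p \<in> G F" "setdistN N F (G F) = N (q - p)"
    by (rule setdistN_attained[OF N F_compact F(2) G_compact G_ne])
  show thesis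
    using that[OF F qp(1)] qp(2,3) F_eq is_norm_minus_commute[OF N] unfolding G_def by simp
qed

lemma face_of_convA_contains_support_columns:
  fixes A :: "real^'n^'m"
  assumes F: "F face_of convA A" and z: "z \<in> std_simplex" "A *v z \<in> F" and i: "0 < z $ i"
  shows "column i A \<in> F"
proof -
  define t where "t = min (z $ i) (1 / 2)"
  have t: "0 < t" "t < 1" "t \<le> z $ i" using i by (auto simp: t_def)
  obtain v where v: "v \<in> std_simplex" "z = (1 - t) *\<^sub>R v + t *\<^sub>R axis i 1"
    using std_simplex_split_axis[OF z(1) t] .
  then have Az: "A *v z = (1 - t) *\<^sub>R (A *v v) + t *\<^sub>R column i A"
    by (simp add: matrix_vector_right_distrib matrix_vector_mult_scaleR matrix_vector_mult_basis)
  show ?thesis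
  proof (cases "A *v v = column i A")
    case True
    then show ?thesis using Az z(2) by (simp add: scaleR_collapse)
  next
    case False
    then have "A *v z \<in> open_segment (A *v v) (column i A)"
      using t Az by (auto simp: in_segment)
    moreover have "A *v v \<in> convA A" using v(1) by (auto simp: convA_def)
    ultimately show ?thesis using face_ofD[OF F _ _ column_in_convA z(2)] by blast
  qed
qed

lemma facial_distance_in_ratios:
  assumes N: "is_norm N" and distinct: "\<exists>i j. column i A \<noteq> column j A"
  shows "facial_distance N A \<in> ratios N A"
proof -
  obtain F p q where F: "F face_of convA A" "F \<noteq> {}" "F \<noteq> convA A" "q \<in> F"
    and p: "p \<in> convex hull {column i A | i. column i A \<notin> F}"
    and fd: "facial_distance N A = N (p - q)"
    by (rule facial_distance_attained[OF N distinct])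
  have "{column i A | i. column i A \<notin> F} = (\<lambda>i. column i A) ` {i. column i A \<notin> F}" by blast
  then have "p \<in> (*v) A ` {x \<in> std_simplex. \<forall>i. i \<notin> {i. column i A \<notin> F} \<longrightarrow> x $ i = 0}"
    using p convex_hull_columns[of A "{i. column i A \<notin> F}"] by simp
  then obtain x where x: "x \<in> std_simplex" "\<And>i. column i A \<in> F \<Longrightarrow> x $ i = 0" "p = A *v x"
    by auto
  have q: "q \<in> convA A" using F(1,4) face_of_imp_subset by blast
  \<comment> \<open>Points of Z(q) only use columns in F, and x uses none.\<close>
  have far: "norm1 (x - z) = 2" if z: "z \<in> Zset A q" for z
  proof (rule norm1_diff_std_simplex_disjoint[OF x(1)])
    show "z \<in> std_simplex" using z by (simp add: Zset_def)
    show "x $ j = 0 \<or> z $ j = 0" for j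
      using face_of_convA_contains_support_columns[OF F(1), of z j] z F(4) x(2)[of j]
        std_simplex_nonneg[OF \<open>z \<in> std_simplex\<close>, of j]
      by (force simp: Zset_def)
  qed
  have "x \<notin> Zset A q" using far[of x] by (auto simp: norm1_def)
  then have "2 * N (A *v x - q) / dist1 x (Zset A q) \<in> ratios N A"
    unfolding ratios_def using q x(1) by blast
  moreover obtain z where "z \<in> Zset A q" "dist1 x (Zset A q) = norm1 (x - z)"
    using dist1_attained[OF compact_Zset Zset_nonempty[OF q]] by blast
  ultimately show ?thesis using far fd x(3) by simp
qed

theorem proposition1:
  fixes N :: "real^'m \<Rightarrow> real" and A :: "real^'n^'m"
  assumes "is_norm N"
    and "\<exists>i j. column i A \<noteq> column j A"
  shows "diamA N A \<in> ratios N A \<and> (\<forall>r\<in>ratios N A. r \<le> diamA N A)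
     \<and> facial_distance N A \<in> ratios N A \<and> (\<forall>r\<in>ratios N A. facial_distance N A \<le> r)"
  using diamA_in_ratios[OF assms] ratios_le_diamA[OF assms(1)]
    facial_distance_in_ratios[OF assms] facial_distance_le_ratios[OF assms(1)]
  by blast

end
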